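(* Consider the problem, algorithm and notation described in the context, with each $f_i$ convex and $l$-smooth, and DCGS run with parameters $\theta_k=\alpha_k=1$, $\eta_k=2\|L\|$, $\tau_k=\|L\|$, $e_i^k=\frac{\|L\|\max(\|\mathbf{x}^0-\mathbf{x}^*\|^2,\|\mathbf{y}^0\|^2)}{mN}$. Then to obtain an output with $F(\overline{\mathbf{x}}_N)-F(\mathbf{x}^* )\le\epsilon$, the number of communication rounds and the number of LO calls performed by each agent are respectively bounded by $$\mathcal{O}\left(\frac{\|L\|\max(\|\mathbf{x}^0-\mathbf{x}^*\|^2,\|\mathbf{y}^0\|^2)}{\epsilon}\right)\quad\text{and}\quad \mathcal{O}\left(\frac{m\|L\|(l+\|L\|)\max(\|\mathbf{x}^0-\mathbf{x}^*\|^2,\|\mathbf{y}^0\|^2)}{\epsilon^2}\right).$$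
   Context: Let $G=(V,E)$ be a connected undirected graph with $V=\{1,\dots,m\}$ and $N(i)=\{j:(i,j)\in E\}$. Its Laplacian $L\in\mathbb{R}^{m\times m}$ has $L_{ii}=|N(i)|$, $L_{ij}=-1$ if $i\ne j$ and $(i,j)\in E$, and $L_{ij}=0$ otherwise; $\|L\|$ is its spectral norm. Agent $i$ holds $f_i:\mathbb{R}^d\to\mathbb{R}$; each $f_i$ is $u$-strongly convex ($u\ge 0$) and $l$-smooth, i.e. $\frac{u}{2}\|y-x\|^2\le f_i(y)-f_i(x)-\nabla f_i(x)^T(y-x)\le\frac{l}{2}\|y-x\|^2$. $X\subset\mathbb{R}^d$ is a nonempty compact convex set accessed through a linear oracle (LO) returning $\arg\min_{s\in X}\langle g,s\rangle$. For $\mathbf{x}=(x_1,\dots,x_m)\in X^m$ let $F(\mathbf{x})=\sum_{i=1}^m f_i(x_i)$, and let $\mathbf{x}^*$ be an optimal solution of $\min_{\mathbf{x}\in X^m}F(\mathbf{x})$ subject to $(L\otimes I_d)\mathbf{x}=0$. All norms on $\mathbb{R}^{md}$ are Euclidean. Procedure $CG(f,x,w,\eta,e)$ (Frank–Wolfe on $\phi(z)=\langle w,z\rangle+f(z)+\frac{\eta}{2}\|z-x\|^2$ over $X$): pick $z^0\in X$; for $t=0,1,\dots$: let $g^t=\nabla f(z^t)+w+\eta(z^t-x)$ and $s^t=\arg\min_{s\in X}\langle g^t,s\rangle$ (one LO call); if $\langle g^t,z^t-s^t\rangle\le e$ return $z^t$; otherwise $z^{t+1}=(1-\gamma_t)z^t+\gamma_t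 s^t$ with $\gamma_t=\frac{2}{t+2}$ or chosen by line search. Algorithm DCGS: given $N$, $\mathbf{x}^0=\mathbf{x}^{-1}\in X^m$, $\mathbf{y}^0\in\mathbb{R}^{md}$ and parameters $\{\alpha_k\},\{\tau_k\},\{\eta_k\},\{\theta_k\},\{e_i^k\}$. For $k=1,\dots,N$, every agent $i$ computes: $\tilde x_i^k=\alpha_k(x_i^{k-1}-x_i^{k-2})+x_i^{k-1}$ and broadcasts it to its neighbors; $v_i^k=\sum_{j\in N(i)\cup\{i\}}L_{ij}\tilde x_j^k$; $y_i^k=y_i^{k-1}+\frac{1}{\tau_k}v_i^k$ and broadcasts it to its neighbors; $w_i^k=\sum_{j\in N(i)\cup\{i\}}L_{ij}y_j^k$; $x_i^k=CG(f_i,x_i^{k-1},w_i^k,\eta_k,e_i^k)$. Thus each outer iteration uses a constant number (two) of communication rounds. Output $\overline{\mathbf{x}}_N=(\sum_{k=1}^N\theta_k)^{-1}\sum_{k=1}^N\theta_k\mathbf{x}^k$. *)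

theory Defs
  imports "HOL-Analysis.Analysis"
begin

definition simple_graph_on :: "nat \<Rightarrow> (nat \<Rightarrow> nat \<Rightarrow> bool) \<Rightarrow> bool" where
  "simple_graph_on m E \<longleftrightarrow>
     (\<forall>i j. E i j \<longrightarrow> i \<in> {1..m} \<and> j \<in> {1..m}) \<and>
     (\<forall>i j. E i j \<longleftrightarrow> E j i) \<and> (\<forall>i. \<not> E i i)"

definition graph_connected :: "nat \<Rightarrow> (nat \<Rightarrow> nat \<Rightarrow> bool) \<Rightarrow> bool" where
  "graph_connected m E \<longleftrightarrow> (\<forall>i\<in>{1..m}. \<forall>j\<in>{1..m}. (i, j) \<in> {(a, b). E a b}\<^sup>*)"

definition laplacian :: "nat \<Rightarrow> (nat \<Rightarrow> nat \<Rightarrow> bool) \<Rightarrow> nat \<Rightarrow> nat \<Rightarrow> real" where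
  "laplacian m E i j =
     (if i = j then real (card {k\<in>{1..m}. E i k}) else if E i j then -1 else 0)"

definition vnorm :: "nat \<Rightarrow> (nat \<Rightarrow> real) \<Rightarrow> real" where
  "vnorm m v = sqrt (\<Sum>i=1..m. (v i)\<^sup>2)"

definition lap_norm :: "nat \<Rightarrow> (nat \<Rightarrow> nat \<Rightarrow> bool) \<Rightarrow> real" where
  "lap_norm m E = Sup {vnorm m (\<lambda>i. \<Sum>j=1..m. laplacian m E i j * v j) | v. vnorm m v \<le> 1}"

(* Euclidean norm on R^{md} of a stacked vector x = (x_1,...,x_m), x_i in R^d *)
definition snorm :: "nat \<Rightarrow> (nat \<Rightarrow> 'a::euclidean_space) \<Rightarrow> real" where
  "snorm m x = sqrt (\<Sum>i=1..m. (norm (x i))\<^sup>2)"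

definition Ftot :: "nat \<Rightarrow> (nat \<Rightarrow> 'a::euclidean_space \<Rightarrow> real) \<Rightarrow> (nat \<Rightarrow> 'a) \<Rightarrow> real" where
  "Ftot m f x = (\<Sum>i=1..m. f i (x i))"

(* (L \<otimes> I_d) x, block i *)
definition lap_apply :: "nat \<Rightarrow> (nat \<Rightarrow> nat \<Rightarrow> bool) \<Rightarrow> (nat \<Rightarrow> 'a::euclidean_space) \<Rightarrow> nat \<Rightarrow> 'a" where
  "lap_apply m E x i = (\<Sum>j=1..m. laplacian m E i j *\<^sub>R x j)"

definition is_opt_sol :: "nat \<Rightarrow> (nat \<Rightarrow> nat \<Rightarrow> bool) \<Rightarrow> (nat \<Rightarrow> 'a::euclidean_space \<Rightarrow> real)
    \<Rightarrow> 'a set \<Rightarrow> (nat \<Rightarrow> 'a) \<Rightarrow> bool" where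
  "is_opt_sol m E f X xs \<longleftrightarrow>
     (\<forall>i\<in>{1..m}. xs i \<in> X) \<and> (\<forall>i\<in>{1..m}. lap_apply m E xs i = 0) \<and>
     (\<forall>x. (\<forall>i\<in>{1..m}. x i \<in> X) \<and> (\<forall>i\<in>{1..m}. lap_apply m E x i = 0)
          \<longrightarrow> Ftot m f xs \<le> Ftot m f x)"

definition lin_oracle :: "'a::euclidean_space set \<Rightarrow> 'a \<Rightarrow> 'a \<Rightarrow> bool" where
  "lin_oracle X g s \<longleftrightarrow> s \<in> X \<and> (\<forall>s'\<in>X. g \<bullet> s \<le> g \<bullet> s')"

(* gradient of phi(z) = <w,z> + f(z) + eta/2 ||z - xc||^2 *)
definition cg_grad :: "('a::euclidean_space \<Rightarrow> 'a) \<Rightarrow> 'a \<Rightarrow> 'a \<Rightarrow> real \<Rightarrow> 'a \<Rightarrow> 'a" where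
  "cg_grad gf xc w eta z = gf z + w + eta *\<^sub>R (z - xc)"

definition cg_gap :: "('a::euclidean_space \<Rightarrow> 'a) \<Rightarrow> 'a \<Rightarrow> 'a \<Rightarrow> real \<Rightarrow> 'a \<Rightarrow> 'a \<Rightarrow> real" where
  "cg_gap gf xc w eta z s = cg_grad gf xc w eta z \<bullet> (z - s)"

(* An (infinitely continued) trace (z^t, s^t) of procedure CG(f, xc, w, eta, e):
   z^0 in X arbitrary, s^t any LO answer, and the step size either 2/(t+2)
   (ls = False) or by exact line search on [0,1] (ls = True).
   The procedure itself stops at the first t with gap <= e (see cg_stop). *)
definition cg_trace :: "('a::euclidean_space \<Rightarrow> real) \<Rightarrow> ('a \<Rightarrow> 'a) \<Rightarrow> 'a set \<Rightarrow> 'a \<Rightarrow> 'a \<Rightarrow> real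
    \<Rightarrow> bool \<Rightarrow> (nat \<Rightarrow> 'a) \<Rightarrow> (nat \<Rightarrow> 'a) \<Rightarrow> bool" where
  "cg_trace f gf X xc w eta ls z s \<longleftrightarrow>
     (let phi = (\<lambda>u. w \<bullet> u + f u + eta / 2 * (norm (u - xc))\<^sup>2) in
      z 0 \<in> X \<and>
      (\<forall>t. lin_oracle X (cg_grad gf xc w eta (z t)) (s t)) \<and>
      (\<forall>t. if ls then
              (\<exists>\<gamma>\<in>{0..1}. (\<forall>\<gamma>'\<in>{0..1}.
                   phi ((1 - \<gamma>) *\<^sub>R z t + \<gamma> *\<^sub>R s t) \<le> phi ((1 - \<gamma>') *\<^sub>R z t + \<gamma>' *\<^sub>R s t)) \<and>
                 z (Suc t) = (1 - \<gamma>) *\<^sub>R z t + \<gamma> *\<^sub>R s t)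
           else z (Suc t) = (1 - 2 / (real t + 2)) *\<^sub>R z t + (2 / (real t + 2)) *\<^sub>R s t))"

(* the iteration index at which CG returns (the number of LO calls is cg_stop + 1) *)
definition cg_stop :: "('a::euclidean_space \<Rightarrow> 'a) \<Rightarrow> 'a \<Rightarrow> 'a \<Rightarrow> real \<Rightarrow> real
    \<Rightarrow> (nat \<Rightarrow> 'a) \<Rightarrow> (nat \<Rightarrow> 'a) \<Rightarrow> nat" where
  "cg_stop gf xc w eta e z s = (LEAST t. cg_gap gf xc w eta (z t) (s t) \<le> e)"

(* DCGS quantities.  x k = x^k for k >= 0, and x^{-1} = x^0 is realised by
   x (k - 2) with truncated subtraction at k = 1. *)
definition dcgs_xt :: "real \<Rightarrow> (nat \<Rightarrow> nat \<Rightarrow> 'a::euclidean_space) \<Rightarrow> nat \<Rightarrow> nat \<Rightarrow> 'a" where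
  "dcgs_xt a x k j = a *\<^sub>R (x (k - 1) j - x (k - 2) j) + x (k - 1) j"

definition dcgs_w :: "nat \<Rightarrow> (nat \<Rightarrow> nat \<Rightarrow> bool) \<Rightarrow> (nat \<Rightarrow> nat \<Rightarrow> 'a::euclidean_space) \<Rightarrow> nat \<Rightarrow> nat \<Rightarrow> 'a" where
  "dcgs_w m E y k i = lap_apply m E (y k) i"

definition dcgs_run :: "nat \<Rightarrow> (nat \<Rightarrow> nat \<Rightarrow> bool) \<Rightarrow> (nat \<Rightarrow> 'a::euclidean_space \<Rightarrow> real)
    \<Rightarrow> (nat \<Rightarrow> 'a \<Rightarrow> 'a) \<Rightarrow> 'a set \<Rightarrow> nat
    \<Rightarrow> (nat \<Rightarrow> real) \<Rightarrow> (nat \<Rightarrow> real) \<Rightarrow> (nat \<Rightarrow> real) \<Rightarrow> (nat \<Rightarrow> nat \<Rightarrow> real) \<Rightarrow> bool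
    \<Rightarrow> (nat \<Rightarrow> 'a) \<Rightarrow> (nat \<Rightarrow> 'a)
    \<Rightarrow> (nat \<Rightarrow> nat \<Rightarrow> 'a) \<Rightarrow> (nat \<Rightarrow> nat \<Rightarrow> 'a)
    \<Rightarrow> (nat \<Rightarrow> nat \<Rightarrow> nat \<Rightarrow> 'a) \<Rightarrow> (nat \<Rightarrow> nat \<Rightarrow> nat \<Rightarrow> 'a) \<Rightarrow> bool" where
  "dcgs_run m E f gf X N alpha tau eta e ls x0 y0 x y Z S \<longleftrightarrow>
     x 0 = x0 \<and> y 0 = y0 \<and>
     (\<forall>k\<in>{1..N}. \<forall>i\<in>{1..m}.
        y k i = y (k - 1) i + (1 / tau k) *\<^sub>R lap_apply m E (dcgs_xt (alpha k) x k) i \<and>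
        cg_trace (f i) (gf i) X (x (k - 1) i) (dcgs_w m E y k i) (eta k) ls (Z k i) (S k i) \<and>
        x k i = Z k i (cg_stop (gf i) (x (k - 1) i) (dcgs_w m E y k i) (eta k) (e k i) (Z k i) (S k i)))"

definition dcgs_cg_terminates :: "nat \<Rightarrow> (nat \<Rightarrow> nat \<Rightarrow> bool) \<Rightarrow> (nat \<Rightarrow> 'a::euclidean_space \<Rightarrow> 'a) \<Rightarrow> nat
    \<Rightarrow> (nat \<Rightarrow> real) \<Rightarrow> (nat \<Rightarrow> nat \<Rightarrow> real)
    \<Rightarrow> (nat \<Rightarrow> nat \<Rightarrow> 'a) \<Rightarrow> (nat \<Rightarrow> nat \<Rightarrow> 'a)
    \<Rightarrow> (nat \<Rightarrow> nat \<Rightarrow> nat \<Rightarrow> 'a) \<Rightarrow> (nat \<Rightarrow> nat \<Rightarrow> nat \<Rightarrow> 'a) \<Rightarrow> bool" where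
  "dcgs_cg_terminates m E gf N eta e x y Z S \<longleftrightarrow>
     (\<forall>k\<in>{1..N}. \<forall>i\<in>{1..m}. \<exists>t.
        cg_gap (gf i) (x (k - 1) i) (dcgs_w m E y k i) (eta k) (Z k i t) (S k i t) \<le> e k i)"

definition dcgs_lo_calls :: "nat \<Rightarrow> (nat \<Rightarrow> nat \<Rightarrow> bool) \<Rightarrow> ('a::euclidean_space \<Rightarrow> 'a) \<Rightarrow> nat \<Rightarrow> nat
    \<Rightarrow> (nat \<Rightarrow> real) \<Rightarrow> (nat \<Rightarrow> nat \<Rightarrow> real)
    \<Rightarrow> (nat \<Rightarrow> nat \<Rightarrow> 'a) \<Rightarrow> (nat \<Rightarrow> nat \<Rightarrow> 'a)
    \<Rightarrow> (nat \<Rightarrow> nat \<Rightarrow> nat \<Rightarrow> 'a) \<Rightarrow> (nat \<Rightarrow> nat \<Rightarrow> nat \<Rightarrow> 'a) \<Rightarrow> nat" where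
  "dcgs_lo_calls m E gfi i N eta e x y Z S =
     (\<Sum>k=1..N. Suc (cg_stop gfi (x (k - 1) i) (dcgs_w m E y k i) (eta k) (e k i) (Z k i) (S k i)))"

definition dcgs_output :: "nat \<Rightarrow> (nat \<Rightarrow> real) \<Rightarrow> (nat \<Rightarrow> nat \<Rightarrow> 'a::euclidean_space) \<Rightarrow> nat \<Rightarrow> 'a" where
  "dcgs_output N theta x i = (1 / (\<Sum>k=1..N. theta k)) *\<^sub>R (\<Sum>k=1..N. theta k *\<^sub>R x k i)"

end

(*
  Each call of CG is Frank-Wolfe on an (l + 2 ||L||)-smooth convex function over X, so its
  duality gap falls below the tolerance e after O((l + ||L||) diam(X)^2 / e) linear-oracle calls.
  The returned x_k therefore satisfies the optimality condition of the proximal step up to e;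
  together with the dual update this makes the potential Phi_k of the primal-dual iteration
  decrease by at least F(x_k) - F(x_star) - m e.  Telescoping and Jensen's inequality give
  F(xbar_N) - F(x_star) <= m e + 3 ||L|| D / (2 N), and the choice N = ceil(3 ||L|| D / eps),
  e = ||L|| D / (m N) yields both bounds.
*)

theory Submission
  imports Defs
begin

section \<open>Stacked vectors and the graph Laplacian\<close>

definition sinner :: "nat \<Rightarrow> (nat \<Rightarrow> 'a::real_inner) \<Rightarrow> (nat \<Rightarrow> 'a) \<Rightarrow> real" where
  "sinner m u v = (\<Sum>i=1..m. u i \<bullet> v i)"

lemma sinner_commute: "sinner m u v = sinner m v u"
  unfolding sinner_def by (simp add: inner_commute)

lemma sinner_self_nonneg: "0 \<le> sinner m u u"
  unfolding sinner_def by (simp add: sum_nonneg)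

lemma sinner_diff_left: "sinner m (u - v) w = sinner m u w - sinner m v w"
  unfolding sinner_def by (simp add: inner_diff_left sum_subtractf)

lemma sinner_diff_right: "sinner m u (v - w) = sinner m u v - sinner m u w"
  using sinner_diff_left by (metis sinner_commute)

lemma sinner_scaleR_right: "sinner m u (\<lambda>i. c *\<^sub>R v i) = c * sinner m u v"
  unfolding sinner_def by (simp add: sum_distrib_left)

lemma sinner_minus_right: "sinner m u (- v) = - sinner m u v"
  unfolding sinner_def by (simp add: sum_negf)

lemma sinner_cong:
  "(\<And>i. i \<in> {1..m} \<Longrightarrow> u i = u' i) \<Longrightarrow> (\<And>i. i \<in> {1..m} \<Longrightarrow> v i = v' i) \<Longrightarrow>
    sinner m u v = sinner m u' v'"
  unfolding sinner_def by (intro sum.cong) auto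

lemma power2_snorm: "(snorm m u)\<^sup>2 = sinner m u u"
  unfolding snorm_def sinner_def by (simp add: sum_nonneg power2_norm_eq_inner)

lemma sinner_three_point:
  "2 * sinner m (u - v) (u - w) = sinner m (u - w) (u - w) - sinner m (v - w) (v - w) + sinner m (u - v) (u - v)"
  unfolding sinner_def
  by (simp add: sum_distrib_left sum_subtractf sum.distrib[symmetric] inner_commute algebra_simps)

lemma sinner_minus_minus: "sinner m (- u) (- u) = sinner m u u"
  unfolding sinner_def by simp

lemma sinner_two_point:
  "2 * sinner m u (u - v) = sinner m u u - sinner m v v + sinner m (u - v) (u - v)"
  unfolding sinner_def
  by (simp add: sum_distrib_left sum_subtractf sum.distrib[symmetric] inner_commute algebra_simps)

lemma sinner_amgm:
  assumes "0 < c"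
  shows "sinner m u v \<le> sinner m u u / (2 * c) + c / 2 * sinner m v v"
proof -
  have "u i \<bullet> v i \<le> u i \<bullet> u i / (2 * c) + c / 2 * (v i \<bullet> v i)" for i
  proof -
    have "0 \<le> (u i - c *\<^sub>R v i) \<bullet> (u i - c *\<^sub>R v i)" by simp
    then show ?thesis
      using assms by (simp add: inner_diff_left inner_diff_right inner_commute field_simps)
  qed
  then have "sinner m u v \<le> (\<Sum>i=1..m. u i \<bullet> u i / (2 * c) + c / 2 * (v i \<bullet> v i))"
    unfolding sinner_def by (rule sum_mono)
  also have "\<dots> = sinner m u u / (2 * c) + c / 2 * sinner m v v"
    unfolding sinner_def by (simp add: sum.distrib sum_divide_distrib sum_distrib_left)
  finally show ?thesis .
qed

lemma laplacian_commute: "(\<forall>i j. E i j \<longleftrightarrow> E j i) \<Longrightarrow> laplacian m E i j = laplacian m E j i"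
  unfolding laplacian_def by auto

lemma lap_apply_diff: "lap_apply m E (u - v) = lap_apply m E u - lap_apply m E v"
  unfolding lap_apply_def by (simp add: fun_eq_iff scaleR_diff_right sum_subtractf)

lemma sinner_lap_apply_commute:
  assumes "\<forall>i j. E i j \<longleftrightarrow> E j i"
  shows "sinner m (lap_apply m E u) v = sinner m u (lap_apply m E v)"
proof -
  have "sinner m (lap_apply m E u) v = (\<Sum>i=1..m. \<Sum>j=1..m. laplacian m E i j * (u j \<bullet> v i))"
    unfolding sinner_def lap_apply_def by (simp add: inner_sum_left)
  also have "\<dots> = (\<Sum>j=1..m. \<Sum>i=1..m. laplacian m E i j * (u j \<bullet> v i))"
    by (rule sum.swap)
  also have "\<dots> = sinner m u (lap_apply m E v)"
    unfolding sinner_def lap_apply_def using laplacian_commute[OF assms]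
    by (simp add: inner_sum_right inner_commute)
  finally show ?thesis .
qed

lemma lap_apply_real: "lap_apply m E v = (\<lambda>i. \<Sum>j=1..m. laplacian m E i j * v j)"
  unfolding lap_apply_def by simp

lemma vnorm_nonneg: "0 \<le> vnorm m v"
  unfolding vnorm_def by (simp add: sum_nonneg)

lemma power2_vnorm: "(vnorm m v)\<^sup>2 = (\<Sum>i=1..m. (v i)\<^sup>2)"
  unfolding vnorm_def by (simp add: sum_nonneg)

lemma vnorm_scale: "vnorm m (\<lambda>i. c * v i) = \<bar>c\<bar> * vnorm m v"
  unfolding vnorm_def
  by (simp add: power_mult_distrib sum_distrib_left[symmetric] real_sqrt_mult)

lemma abs_le_vnorm: "i \<in> {1..m} \<Longrightarrow> \<bar>v i\<bar> \<le> vnorm m v"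
  unfolding vnorm_def
  by (metis finite_atLeastAtMost member_le_sum real_sqrt_abs real_sqrt_le_mono zero_le_power2)

lemma abs_laplacian_le: "\<bar>laplacian m E i j\<bar> \<le> real m + 1"
proof -
  have "card {k\<in>{1..m}. E i k} \<le> card {1..m}" by (rule card_mono) auto
  then show ?thesis unfolding laplacian_def by auto
qed

lemma bdd_above_lap_apply_ball:
  "bdd_above {vnorm m (lap_apply m E v) | v :: nat \<Rightarrow> real. vnorm m v \<le> 1}"
proof -
  have "vnorm m (lap_apply m E v) \<le> sqrt (real m * (real m * (real m + 1))\<^sup>2)"
    if "vnorm m v \<le> 1" for v :: "nat \<Rightarrow> real"
  proof -
    have "\<bar>lap_apply m E v i\<bar> \<le> real m * (real m + 1)" for i
    proof -
      have "\<bar>lap_apply m E v i\<bar> \<le> (\<Sum>j=1..m. \<bar>laplacian m E i j\<bar> * \<bar>v j\<bar>)"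
        unfolding lap_apply_real by (simp add: abs_mult[symmetric])
      also have "\<dots> \<le> (\<Sum>j=1..m. real m + 1)"
      proof (rule sum_mono)
        fix j assume "j \<in> {1..m}"
        then have "\<bar>v j\<bar> \<le> 1" using abs_le_vnorm[of j m v] that by simp
        then show "\<bar>laplacian m E i j\<bar> * \<bar>v j\<bar> \<le> real m + 1"
          using mult_mono[OF abs_laplacian_le[of m E i j], of "\<bar>v j\<bar>" 1] by simp
      qed
      finally show ?thesis by simp
    qed
    then have "(\<Sum>i=1..m. (lap_apply m E v i)\<^sup>2) \<le> (\<Sum>i=1..m. (real m * (real m + 1))\<^sup>2)"
      by (intro sum_mono) (simp add: abs_le_square_iff[symmetric])
    then show ?thesis unfolding vnorm_def by simp
  qed
  then show ?thesis unfolding bdd_above_def by blast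
qed

lemma vnorm_lap_apply_le: "vnorm m (lap_apply m E v) \<le> lap_norm m E * vnorm m v"
proof (cases "vnorm m v = 0")
  case True
  then have "v i = 0" if "i \<in> {1..m}" for i
    using abs_le_vnorm[OF that, of v] by simp
  then have "lap_apply m E v = (\<lambda>i. 0)"
    unfolding lap_apply_real by simp
  then show ?thesis using True by (simp add: vnorm_def)
next
  case False
  define c where "c = vnorm m v"
  have c: "0 < c" using False vnorm_nonneg[of m v] unfolding c_def by simp
  have "vnorm m (\<lambda>i. (1 / c) * v i) = 1" unfolding vnorm_scale using c c_def by simp
  then have "vnorm m (lap_apply m E (\<lambda>i. (1 / c) * v i)) \<le> lap_norm m E"
    unfolding lap_norm_def lap_apply_real[symmetric] by (intro cSup_upper bdd_above_lap_apply_ball) auto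
  also have "lap_apply m E (\<lambda>i. (1 / c) * v i) = (\<lambda>i. (1 / c) * lap_apply m E v i)"
    unfolding lap_apply_real by (simp add: sum_distrib_left mult.left_commute)
  finally show ?thesis using c unfolding vnorm_scale c_def by (simp add: field_simps)
qed

lemma sinner_lap_apply_self_le:
  fixes u :: "nat \<Rightarrow> 'a::euclidean_space"
  shows "sinner m (lap_apply m E u) (lap_apply m E u) \<le> (lap_norm m E)\<^sup>2 * sinner m u u"
\<comment> \<open>The Kronecker product with I_d acts separately on each coordinate of 'a.\<close>
proof -
  let ?L = "lap_norm m E"
  define w where "w b j = u j \<bullet> b" for b j
  have coord: "lap_apply m E u i \<bullet> b = lap_apply m E (w b) i" for i b
    unfolding lap_apply_def w_def by (simp add: inner_sum_left)
  have sq: "z \<bullet> z = (\<Sum>b\<in>Basis. (z \<bullet> b)\<^sup>2)" for z :: 'a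
    by (subst euclidean_inner) (simp add: power2_eq_square)
  have "sinner m (lap_apply m E u) (lap_apply m E u) = (\<Sum>b\<in>(Basis::'a set). (vnorm m (lap_apply m E (w b)))\<^sup>2)"
    unfolding sinner_def power2_vnorm sq coord by (rule sum.swap)
  also have "\<dots> \<le> (\<Sum>b\<in>(Basis::'a set). ?L\<^sup>2 * (vnorm m (w b))\<^sup>2)"
    by (intro sum_mono) (metis power_mono power_mult_distrib vnorm_lap_apply_le vnorm_nonneg)
  also have "\<dots> = ?L\<^sup>2 * sinner m u u"
    unfolding sinner_def power2_vnorm sq w_def sum_distrib_left by (rule sum.swap)
  finally show ?thesis .
qed

lemma sinner_lap_apply_le:
  fixes u v :: "nat \<Rightarrow> 'a::euclidean_space"
  assumes "0 < lap_norm m E"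
  shows "sinner m (lap_apply m E u) v \<le> lap_norm m E / 2 * (sinner m u u + sinner m v v)"
proof -
  let ?L = "lap_norm m E"
  have "sinner m (lap_apply m E u) v
      \<le> sinner m (lap_apply m E u) (lap_apply m E u) / (2 * ?L) + ?L / 2 * sinner m v v"
    by (rule sinner_amgm[OF assms])
  also have "\<dots> \<le> ?L\<^sup>2 * sinner m u u / (2 * ?L) + ?L / 2 * sinner m v v"
    using sinner_lap_apply_self_le[of m E u] assms by (simp add: divide_right_mono)
  also have "\<dots> = ?L / 2 * (sinner m u u + sinner m v v)"
    using assms by (simp add: field_simps power2_eq_square)
  finally show ?thesis .
qed

lemma lap_norm_ge_1:
  assumes "2 \<le> m" and "simple_graph_on m E" and "graph_connected m E"
  shows "1 \<le> lap_norm m E"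
\<comment> \<open>Vertex 1 has a neighbour, so L_11 >= 1, and L e_1 has first entry L_11.\<close>
proof -
  have "(1, 2) \<in> {(a, b). E a b}\<^sup>*"
    using assms(1,3) unfolding graph_connected_def by auto
  then obtain c where "E 1 c"
    by (cases rule: converse_rtranclE) auto
  define nbrs where "nbrs = {k\<in>{1..m}. E 1 k}"
  have "c \<in> nbrs"
    using \<open>E 1 c\<close> assms(2) unfolding simple_graph_on_def nbrs_def by blast
  then have "card nbrs \<noteq> 0" unfolding nbrs_def by auto
  then have deg: "1 \<le> laplacian m E 1 1"
    unfolding laplacian_def nbrs_def[symmetric] by simp
  define v :: "nat \<Rightarrow> real" where "v j = (if j = 1 then 1 else 0)" for j
  have one: "1 \<in> {1..m}" using assms(1) by simp
  have "vnorm m v = 1"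
    unfolding vnorm_def v_def using one by (simp add: if_distrib[where f = "\<lambda>x::real. x\<^sup>2"] cong: if_cong)
  moreover have "lap_apply m E v 1 = laplacian m E 1 1"
    unfolding lap_apply_real v_def using one by (simp add: if_distrib[where f = "times _"] cong: if_cong)
  ultimately show ?thesis
    using deg abs_le_vnorm[OF one, of "lap_apply m E v"] vnorm_lap_apply_le[of m E v] by simp
qed

section \<open>Frank-Wolfe\<close>

lemma frank_wolfe_primal_rate:
  fixes h :: "nat \<Rightarrow> real"
  assumes C: "0 \<le> C"
    and rec: "\<And>t. h (Suc t) \<le> (1 - 2 / (real t + 2)) * h t + (2 / (real t + 2))\<^sup>2 * C / 2"
  shows "h (Suc t) \<le> 2 * C / (real t + 3)"
proof (induction t)
  case 0
  show ?case using rec[of 0] C by simp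
next
  case (Suc t)
  define r where "r = real t + 3"
  have r: "3 \<le> r" unfolding r_def by simp
  have "h (Suc (Suc t)) \<le> (1 - 2 / r) * h (Suc t) + (2 / r)\<^sup>2 * C / 2"
    using rec[of "Suc t"] unfolding r_def by (simp add: add.commute add.left_commute)
  also have "\<dots> \<le> (1 - 2 / r) * (2 * C / r) + (2 / r)\<^sup>2 * C / 2"
    using Suc.IH r unfolding r_def by (intro add_right_mono mult_left_mono) simp_all
  also have "\<dots> = 2 * C * (r - 1) / r\<^sup>2"
    using r by (simp add: field_simps power2_eq_square)
  also have "\<dots> \<le> 2 * C / (r + 1)"
  proof -
    have "(r - 1) * (r + 1) \<le> r\<^sup>2"
      by (simp add: power2_eq_square algebra_simps)
    then show ?thesis
      using C r by (simp add: divide_simps mult_left_mono)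
  qed
  finally show ?case unfolding r_def by (simp add: add.commute)
qed

lemma frank_wolfe_window_step:
  fixes h g :: "nat \<Rightarrow> real"
  assumes C: "0 \<le> C" and e: "0 \<le> e" and t: "K \<le> t" "t \<le> 2 * K" and g: "e < g t"
    and descent: "h (Suc t) \<le> h t - 2 / (real t + 2) * g t + (2 / (real t + 2))\<^sup>2 * C / 2"
  shows "h (Suc t) - h t \<le> - e / (real K + 1) + 2 * C / (real K + 2)\<^sup>2"
proof -
  define \<gamma> where "\<gamma> = 2 / (real t + 2)"
  have "1 / (real K + 1) \<le> \<gamma>" and "\<gamma> \<le> 2 / (real K + 2)"
    using t unfolding \<gamma>_def by (simp_all add: field_simps frac_le)
  then have "e / (real K + 1) \<le> \<gamma> * g t"
    using g e mult_right_mono[of "1 / (real K + 1)" \<gamma> e] mult_left_mono[of e "g t" \<gamma>]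
    by (simp add: \<gamma>_def)
  moreover have "\<gamma>\<^sup>2 * C / 2 \<le> 2 * C / (real K + 2)\<^sup>2"
  proof -
    have "\<gamma>\<^sup>2 \<le> (2 / (real K + 2))\<^sup>2"
      using \<open>\<gamma> \<le> 2 / (real K + 2)\<close> by (rule power_mono) (simp add: \<gamma>_def)
    from mult_right_mono[OF this C] show ?thesis
      by (simp add: power_divide)
  qed
  ultimately show ?thesis
    using descent unfolding \<gamma>_def by linarith
qed

lemma frank_wolfe_gap_rate:
  fixes h g :: "nat \<Rightarrow> real"
  assumes C: "0 \<le> C" and e: "0 < e"
    and h_nonneg: "\<And>t. 0 \<le> h t" and h_le_g: "\<And>t. h t \<le> g t"
    and descent: "\<And>t. h (Suc t) \<le> h t - 2 / (real t + 2) * g t + (2 / (real t + 2))\<^sup>2 * C / 2"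
  shows "\<exists>t \<le> 2 * (nat \<lceil>4 * C / e\<rceil> + 1). g t \<le> e"
\<comment> \<open>Otherwise the steps K, ..., 2K, all of size at least 1/(K+1), would push h below zero.\<close>
proof (rule ccontr)
  define K where "K = nat \<lceil>4 * C / e\<rceil> + 1"
  assume "\<not> ?thesis"
  then have g_big: "e < g t" if "t \<le> 2 * K" for t
    using that unfolding K_def by force
  have "h (Suc t) \<le> (1 - 2 / (real t + 2)) * h t + (2 / (real t + 2))\<^sup>2 * C / 2" for t
    using descent[of t] mult_left_mono[OF h_le_g[of t], of "2 / (real t + 2)"]
    by (simp add: algebra_simps)
  then have hK: "h K \<le> 2 * C / (real K + 2)"
    using frank_wolfe_primal_rate[OF C, of h "K - 1"] unfolding K_def by (simp add: add.commute)
  have "h (Suc t) - h t \<le> - e / (real K + 1) + 2 * C / (real K + 2)\<^sup>2" if "t \<in> {K..<2 * K + 1}" for t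
    by (rule frank_wolfe_window_step[where h = h and g = g and K = K and t = t])
      (use that g_big[of t] descent[of t] C e in auto)
  then have "(\<Sum>t = K..<2 * K + 1. h (Suc t) - h t) \<le> (\<Sum>t = K..<2 * K + 1. - e / (real K + 1) + 2 * C / (real K + 2)\<^sup>2)"
    by (rule sum_mono)
  then have "h (2 * K + 1) - h K \<le> (real K + 1) * (- e / (real K + 1) + 2 * C / (real K + 2)\<^sup>2)"
    by (simp add: sum_Suc_diff' add.commute)
  also have "\<dots> \<le> - e + 2 * C / (real K + 2)"
  proof -
    have "(real K + 1) * (e / (real K + 1)) = e" by simp
    moreover have "(real K + 1) * (2 * C / (real K + 2)\<^sup>2) \<le> 2 * C / (real K + 2)"
      using C by (simp add: divide_simps power2_eq_square) (simp add: algebra_simps)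
    ultimately show ?thesis by (simp add: right_diff_distrib)
  qed
  finally have "h (2 * K + 1) \<le> 4 * C / (real K + 2) - e"
    using hK by simp
  moreover have "4 * C / (real K + 2) < e"
  proof -
    have "4 * C / e < real K + 2" unfolding K_def by linarith
    then show ?thesis using e by (simp add: field_simps)
  qed
  ultimately show False
    using h_nonneg[of "2 * K + 1"] by simp
qed

definition bregman :: "('a::real_inner \<Rightarrow> real) \<Rightarrow> ('a \<Rightarrow> 'a) \<Rightarrow> 'a \<Rightarrow> 'a \<Rightarrow> real" where
  "bregman f g x y = f y - f x - g x \<bullet> (y - x)"

lemma frank_wolfe_gap_bound:
  fixes \<phi> :: "'a::real_inner \<Rightarrow> real"
  assumes zX: "\<And>t. z t \<in> X" and sX: "\<And>t. s t \<in> X"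
    and lin_min: "\<And>t v. v \<in> X \<Longrightarrow> G (z t) \<bullet> s t \<le> G (z t) \<bullet> v"
    and step: "\<And>t. \<phi> (z (Suc t)) \<le> \<phi> ((1 - 2 / (real t + 2)) *\<^sub>R z t + (2 / (real t + 2)) *\<^sub>R s t)"
    and u: "u \<in> X" "\<And>v. v \<in> X \<Longrightarrow> \<phi> u \<le> \<phi> v"
    and bregman_bounds: "\<And>a b. 0 \<le> bregman \<phi> G a b \<and> bregman \<phi> G a b \<le> M / 2 * (norm (b - a))\<^sup>2"
    and M: "0 \<le> M" and diam: "\<And>a b. a \<in> X \<Longrightarrow> b \<in> X \<Longrightarrow> (norm (a - b))\<^sup>2 \<le> B"
    and e: "0 < e"
  shows "\<exists>t \<le> 2 * (nat \<lceil>4 * (M * B) / e\<rceil> + 1). G (z t) \<bullet> (z t - s t) \<le> e"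
proof (rule frank_wolfe_gap_rate)
  show "0 \<le> M * B" using M diam[OF u(1) u(1)] by simp
  show "0 \<le> \<phi> (z t) - \<phi> u" for t using u(2)[OF zX] by simp
  show "\<phi> (z t) - \<phi> u \<le> G (z t) \<bullet> (z t - s t)" for t
    using bregman_bounds[of "z t" u] lin_min[OF u(1), of t]
    unfolding bregman_def by (simp add: inner_diff_right)
  show "\<phi> (z (Suc t)) - \<phi> u \<le> \<phi> (z t) - \<phi> u - 2 / (real t + 2) * (G (z t) \<bullet> (z t - s t))
      + (2 / (real t + 2))\<^sup>2 * (M * B) / 2" for t
  proof -
    define \<gamma> where "\<gamma> = 2 / (real t + 2)"
    have d: "(1 - \<gamma>) *\<^sub>R z t + \<gamma> *\<^sub>R s t - z t = - \<gamma> *\<^sub>R (z t - s t)"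
      by (simp add: algebra_simps)
    have n: "(norm (- \<gamma> *\<^sub>R (z t - s t)))\<^sup>2 = \<gamma>\<^sup>2 * (norm (z t - s t))\<^sup>2"
      by (simp only: norm_scaleR power_mult_distrib abs_minus_cancel power2_abs)
    have "M / 2 * (norm (- \<gamma> *\<^sub>R (z t - s t)))\<^sup>2 \<le> \<gamma>\<^sup>2 * (M * B) / 2"
      unfolding n using mult_left_mono[OF diam[OF zX sX, of t t], of "\<gamma>\<^sup>2 * M"] M
      by (simp add: algebra_simps)
    then have "\<phi> ((1 - \<gamma>) *\<^sub>R z t + \<gamma> *\<^sub>R s t) \<le> \<phi> (z t) - \<gamma> * (G (z t) \<bullet> (z t - s t)) + \<gamma>\<^sup>2 * (M * B) / 2"
      using bregman_bounds[of "z t" "(1 - \<gamma>) *\<^sub>R z t + \<gamma> *\<^sub>R s t"] unfolding bregman_def d by simp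
    then show ?thesis using step[of t] unfolding \<gamma>_def by simp
  qed
qed (use e in simp)

definition cg_obj :: "('a::real_inner \<Rightarrow> real) \<Rightarrow> 'a \<Rightarrow> 'a \<Rightarrow> real \<Rightarrow> 'a \<Rightarrow> real" where
  "cg_obj f xc w \<eta> u = w \<bullet> u + f u + \<eta> / 2 * (norm (u - xc))\<^sup>2"

lemma bregman_cg_obj:
  "bregman (cg_obj f xc w \<eta>) (cg_grad gf xc w \<eta>) a b = bregman f gf a b + \<eta> / 2 * (norm (b - a))\<^sup>2"
proof -
  have "(norm (b - xc))\<^sup>2 = (norm (a - xc))\<^sup>2 + 2 * ((a - xc) \<bullet> (b - a)) + (norm (b - a))\<^sup>2"
    unfolding power2_norm_eq_inner by (simp add: inner_diff_left inner_diff_right inner_commute)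
  then have "\<eta> / 2 * (norm (b - xc))\<^sup>2
      = \<eta> / 2 * ((norm (a - xc))\<^sup>2 + 2 * ((a - xc) \<bullet> (b - a)) + (norm (b - a))\<^sup>2)"
    by simp
  then show ?thesis
    unfolding bregman_def cg_obj_def cg_grad_def by (simp add: algebra_simps)
qed

lemma cg_trace_next:
  assumes "cg_trace f gf X xc w \<eta> ls z s"
  obtains \<gamma> where "\<gamma> \<in> {0..1}" and "z (Suc t) = (1 - \<gamma>) *\<^sub>R z t + \<gamma> *\<^sub>R s t"
    and "cg_obj f xc w \<eta> (z (Suc t))
      \<le> cg_obj f xc w \<eta> ((1 - 2 / (real t + 2)) *\<^sub>R z t + (2 / (real t + 2)) *\<^sub>R s t)"
\<comment> \<open>Exact line search does at least as well as the step 2/(t+2).\<close>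
proof -
  have step_size: "2 / (real t + 2) \<in> {0..1}" by simp
  have step: "if ls then (\<exists>\<gamma>\<in>{0..1}. (\<forall>\<gamma>'\<in>{0..1}.
            cg_obj f xc w \<eta> ((1 - \<gamma>) *\<^sub>R z t + \<gamma> *\<^sub>R s t)
              \<le> cg_obj f xc w \<eta> ((1 - \<gamma>') *\<^sub>R z t + \<gamma>' *\<^sub>R s t)) \<and>
          z (Suc t) = (1 - \<gamma>) *\<^sub>R z t + \<gamma> *\<^sub>R s t)
        else z (Suc t) = (1 - 2 / (real t + 2)) *\<^sub>R z t + (2 / (real t + 2)) *\<^sub>R s t"
    using assms unfolding cg_trace_def Let_def cg_obj_def by blast
  show ?thesis
  proof (cases ls)
    case True
    then show ?thesis using step that step_size by auto
  next
    case False
    then show ?thesis using step that[OF step_size] by simp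
  qed
qed

lemma cg_trace_lin_oracle:
  "cg_trace f gf X xc w \<eta> ls z s \<Longrightarrow> lin_oracle X (cg_grad gf xc w \<eta> (z t)) (s t)"
  unfolding cg_trace_def Let_def by simp

lemma cg_trace_mem:
  assumes "convex X" and "cg_trace f gf X xc w \<eta> ls z s"
  shows "z t \<in> X" and "s t \<in> X"
proof -
  show s: "s t \<in> X" for t
    using cg_trace_lin_oracle[OF assms(2)] unfolding lin_oracle_def by blast
  show "z t \<in> X"
  proof (induction t)
    case 0
    show ?case using assms(2) unfolding cg_trace_def Let_def by blast
  next
    case (Suc t)
    obtain \<gamma> where "\<gamma> \<in> {0..1}" and "z (Suc t) = (1 - \<gamma>) *\<^sub>R z t + \<gamma> *\<^sub>R s t"
      using cg_trace_next[OF assms(2)] by blast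
    then show ?case using convexD[OF assms(1) Suc s[of t]] by simp
  qed
qed

lemma cg_grad_inner_le_cg_gap:
  assumes "cg_trace f gf X xc w \<eta> ls z s" and "v \<in> X"
  shows "cg_grad gf xc w \<eta> (z t) \<bullet> (z t - v) \<le> cg_gap gf xc w \<eta> (z t) (s t)"
  using assms unfolding cg_trace_def lin_oracle_def cg_gap_def Let_def
  by (simp add: inner_diff_right)

lemma cg_stop_le: "cg_gap gf xc w \<eta> (z t) (s t) \<le> e \<Longrightarrow> cg_stop gf xc w \<eta> e z s \<le> t"
  unfolding cg_stop_def by (rule Least_le)

lemma cg_gap_at_cg_stop:
  "cg_gap gf xc w \<eta> (z t) (s t) \<le> e \<Longrightarrow>
    cg_gap gf xc w \<eta> (z (cg_stop gf xc w \<eta> e z s)) (s (cg_stop gf xc w \<eta> e z s)) \<le> e"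
  unfolding cg_stop_def by (rule LeastI)

lemma cg_trace_gap_bound:
  fixes f :: "'a::euclidean_space \<Rightarrow> real"
  assumes "compact X" and "convex X" and "continuous_on X f"
    and bregman_bounds: "\<And>a b. 0 \<le> bregman f gf a b \<and> bregman f gf a b \<le> l / 2 * (norm (b - a))\<^sup>2"
    and "0 \<le> l" and "0 \<le> \<eta>" and diam: "\<And>a b. a \<in> X \<Longrightarrow> b \<in> X \<Longrightarrow> (norm (a - b))\<^sup>2 \<le> B"
    and "0 < e" and trace: "cg_trace f gf X xc w \<eta> ls z s"
  shows "\<exists>t \<le> 2 * (nat \<lceil>4 * ((l + \<eta>) * B) / e\<rceil> + 1). cg_gap gf xc w \<eta> (z t) (s t) \<le> e"
proof -
  have cont: "continuous_on X (cg_obj f xc w \<eta>)"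
    unfolding cg_obj_def by (intro continuous_intros assms(3))
  then obtain u where u: "u \<in> X" "\<And>v. v \<in> X \<Longrightarrow> cg_obj f xc w \<eta> u \<le> cg_obj f xc w \<eta> v"
    using continuous_attains_inf[OF assms(1) _ cont] cg_trace_mem(1)[OF assms(2) trace, of 0]
    by auto
  show ?thesis
    unfolding cg_gap_def
  proof (rule frank_wolfe_gap_bound[where \<phi> = "cg_obj f xc w \<eta>" and u = u])
    show "z t \<in> X" "s t \<in> X" for t
      using cg_trace_mem[OF assms(2) trace] by auto
    show "cg_grad gf xc w \<eta> (z t) \<bullet> s t \<le> cg_grad gf xc w \<eta> (z t) \<bullet> v" if "v \<in> X" for t v
      using cg_trace_lin_oracle[OF trace] that unfolding lin_oracle_def by blast
    show "cg_obj f xc w \<eta> (z (Suc t))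
        \<le> cg_obj f xc w \<eta> ((1 - 2 / (real t + 2)) *\<^sub>R z t + (2 / (real t + 2)) *\<^sub>R s t)" for t
      using cg_trace_next[OF trace] by blast
    show "0 \<le> bregman (cg_obj f xc w \<eta>) (cg_grad gf xc w \<eta>) a b \<and>
        bregman (cg_obj f xc w \<eta>) (cg_grad gf xc w \<eta>) a b \<le> (l + \<eta>) / 2 * (norm (b - a))\<^sup>2" for a b
      using bregman_bounds[of a b] \<open>0 \<le> \<eta>\<close> unfolding bregman_cg_obj by (simp add: field_simps)
  qed (use u assms in auto)
qed

section \<open>Primal-dual analysis of DCGS\<close>

definition dcgs_potential :: "nat \<Rightarrow> (nat \<Rightarrow> nat \<Rightarrow> bool) \<Rightarrow> (nat \<Rightarrow> 'a::euclidean_space)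
    \<Rightarrow> (nat \<Rightarrow> nat \<Rightarrow> 'a) \<Rightarrow> (nat \<Rightarrow> nat \<Rightarrow> 'a) \<Rightarrow> nat \<Rightarrow> real" where
  "dcgs_potential m E xs x y k =
     lap_norm m E * sinner m (x k - xs) (x k - xs) + lap_norm m E / 2 * sinner m (y k) (y k)
     + sinner m (y k) (lap_apply m E (x k - x (k - 1)))
     + lap_norm m E / 2 * sinner m (x k - x (k - 1)) (x k - x (k - 1))"

lemma dcgs_potential_0:
  "dcgs_potential m E xs x y 0
    = lap_norm m E * sinner m (x 0 - xs) (x 0 - xs) + lap_norm m E / 2 * sinner m (y 0) (y 0)"
  unfolding dcgs_potential_def lap_apply_diff sinner_diff_right by (simp add: sinner_def)

lemma dcgs_potential_nonneg:
  fixes x y :: "nat \<Rightarrow> nat \<Rightarrow> 'a::euclidean_space"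
  assumes sym: "\<forall>i j. E i j \<longleftrightarrow> E j i" and L: "0 < lap_norm m E"
  shows "0 \<le> dcgs_potential m E xs x y k"
proof -
  let ?L = "lap_norm m E" and ?d = "x k - x (k - 1)"
  have "- sinner m (y k) (lap_apply m E ?d) = sinner m (lap_apply m E ?d) (- y k)"
    using sinner_minus_right[of m "lap_apply m E ?d" "y k"] sinner_commute[of m "y k"] by simp
  also have "\<dots> \<le> ?L / 2 * (sinner m ?d ?d + sinner m (y k) (y k))"
    using sinner_lap_apply_le[OF L, of ?d "- y k"] by (simp add: sinner_minus_minus)
  finally show ?thesis
    unfolding dcgs_potential_def
    using L sinner_self_nonneg[of m "x k - xs"] by (simp add: algebra_simps)
qed

lemma dcgs_dual_pairing_eq:
  fixes x y :: "nat \<Rightarrow> nat \<Rightarrow> 'a::euclidean_space"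
  assumes sym: "\<forall>i j. E i j \<longleftrightarrow> E j i" and L: "0 < lap_norm m E"
    and xs: "\<forall>i\<in>{1..m}. lap_apply m E xs i = 0"
    and dual: "\<And>i. i \<in> {1..m} \<Longrightarrow> y k i = y (k - 1) i + (1 / lap_norm m E) *\<^sub>R lap_apply m E (dcgs_xt 1 x k) i"
  shows "sinner m (lap_apply m E (y k)) (x k - xs)
    = lap_norm m E * sinner m (y k) (y k - y (k - 1)) - sinner m (y k) (lap_apply m E (x (k - 1) - x (k - 1 - 1)))
      + sinner m (y k) (lap_apply m E (x k - x (k - 1)))"
proof -
  let ?A = "lap_apply m E"
  define d where "d = x k - x (k - 1)"
  define d' where "d' = x (k - 1) - x (k - 1 - 1)"
  have "sinner m (y k) (?A xs) = 0"
    using xs by (simp add: sinner_def)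
  then have "sinner m (?A (y k)) (x k - xs) = sinner m (y k) (?A (x k))"
    by (simp add: sinner_lap_apply_commute[OF sym] lap_apply_diff sinner_diff_right)
  also have "\<dots> = sinner m (y k) (?A (dcgs_xt 1 x k)) - sinner m (y k) (?A d') + sinner m (y k) (?A d)"
  proof -
    \<comment> \<open>Also for k = 1, where both x (k - 2) and x (k - 1 - 1) are x 0.\<close>
    have "x k = dcgs_xt 1 x k - (d' - d)"
      by (simp add: fun_eq_iff d_def d'_def dcgs_xt_def numeral_2_eq_2)
    then show ?thesis by (simp add: lap_apply_diff sinner_diff_right)
  qed
  also have "sinner m (y k) (?A (dcgs_xt 1 x k)) = lap_norm m E * sinner m (y k) (y k - y (k - 1))"
  proof -
    have "sinner m (y k) (?A (dcgs_xt 1 x k)) = sinner m (y k) (\<lambda>i. lap_norm m E *\<^sub>R (y k - y (k - 1)) i)"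
      using dual L by (intro sinner_cong) simp_all
    then show ?thesis by (simp only: sinner_scaleR_right)
  qed
  finally show ?thesis
    unfolding d_def d'_def .
qed

lemma dcgs_potential_decrease:
  fixes x y :: "nat \<Rightarrow> nat \<Rightarrow> 'a::euclidean_space"
  assumes sym: "\<forall>i j. E i j \<longleftrightarrow> E j i" and L: "0 < lap_norm m E"
    and xs: "\<forall>i\<in>{1..m}. lap_apply m E xs i = 0"
    and dual: "\<And>i. i \<in> {1..m} \<Longrightarrow> y k i = y (k - 1) i + (1 / lap_norm m E) *\<^sub>R lap_apply m E (dcgs_xt 1 x k) i"
  shows "- sinner m (lap_apply m E (y k)) (x k - xs) - 2 * lap_norm m E * sinner m (x k - x (k - 1)) (x k - xs)
    \<le> dcgs_potential m E xs x y (k - 1) - dcgs_potential m E xs x y k"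
proof -
  let ?L = "lap_norm m E" and ?A = "lap_apply m E"
  define d where "d j = x j - x (j - 1)" for j
  define \<Delta> where "\<Delta> = y k - y (k - 1)"
  have "sinner m (?A (y k)) (x k - xs)
      = ?L * sinner m (y k) \<Delta> - sinner m (y k) (?A (d (k - 1))) + sinner m (y k) (?A (d k))"
    unfolding d_def \<Delta>_def by (rule dcgs_dual_pairing_eq[OF sym L xs dual])
  moreover have "sinner m (y k) (?A (d (k - 1))) = sinner m (y (k - 1)) (?A (d (k - 1))) + sinner m \<Delta> (?A (d (k - 1)))"
    unfolding \<Delta>_def sinner_diff_left by simp
  moreover have "sinner m \<Delta> (?A (d (k - 1))) \<le> ?L / 2 * sinner m (d (k - 1)) (d (k - 1)) + ?L / 2 * sinner m \<Delta> \<Delta>"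
    using sinner_lap_apply_le[OF L, of "d (k - 1)" \<Delta>]
    by (simp add: sinner_lap_apply_commute[OF sym] sinner_commute algebra_simps)
  moreover have "?L * sinner m (y k) \<Delta>
      = ?L / 2 * sinner m (y k) (y k) - ?L / 2 * sinner m (y (k - 1)) (y (k - 1)) + ?L / 2 * sinner m \<Delta> \<Delta>"
    using sinner_two_point[of m "y k" "y (k - 1)"] unfolding \<Delta>_def by algebra
  moreover have "2 * ?L * sinner m (d k) (x k - xs)
      = ?L * sinner m (x k - xs) (x k - xs) - ?L * sinner m (x (k - 1) - xs) (x (k - 1) - xs)
        + ?L * sinner m (d k) (d k)"
    using sinner_three_point[of m "x k" "x (k - 1)" xs] unfolding d_def by algebra
  moreover have "0 \<le> ?L / 2 * sinner m (d k) (d k)"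
    using L sinner_self_nonneg[of m "d k"] by simp
  ultimately show ?thesis
    unfolding dcgs_potential_def d_def[symmetric] by linarith
qed

lemma Ftot_diff_le_cg_grad:
  fixes xk xp xs yk :: "nat \<Rightarrow> 'a::euclidean_space"
  assumes convex: "\<And>i a b. i \<in> {1..m} \<Longrightarrow> 0 \<le> bregman (f i) (gf i) a b"
    and opt: "\<And>i. i \<in> {1..m} \<Longrightarrow> cg_grad (gf i) (xp i) (lap_apply m E yk i) \<eta> (xk i) \<bullet> (xk i - xs i) \<le> e"
  shows "Ftot m f xk - Ftot m f xs
    \<le> real m * e - sinner m (lap_apply m E yk) (xk - xs) - \<eta> * sinner m (xk - xp) (xk - xs)"
proof -
  have "Ftot m f xk - Ftot m f xs \<le> (\<Sum>i=1..m. gf i (xk i) \<bullet> (xk i - xs i))"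
    unfolding Ftot_def sum_subtractf[symmetric]
  proof (rule sum_mono)
    fix i assume "i \<in> {1..m}"
    then show "f i (xk i) - f i (xs i) \<le> gf i (xk i) \<bullet> (xk i - xs i)"
      using convex[of i "xk i" "xs i"] unfolding bregman_def by (simp add: inner_diff_right)
  qed
  also have "\<dots> \<le> (\<Sum>i=1..m. e - lap_apply m E yk i \<bullet> (xk i - xs i) - \<eta> * ((xk i - xp i) \<bullet> (xk i - xs i)))"
  proof (rule sum_mono)
    fix i assume "i \<in> {1..m}"
    then show "gf i (xk i) \<bullet> (xk i - xs i)
        \<le> e - lap_apply m E yk i \<bullet> (xk i - xs i) - \<eta> * ((xk i - xp i) \<bullet> (xk i - xs i))"
      using opt[OF \<open>i \<in> {1..m}\<close>] unfolding cg_grad_def by (simp add: inner_add_left)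
  qed
  also have "\<dots> = real m * e - sinner m (lap_apply m E yk) (xk - xs) - \<eta> * sinner m (xk - xp) (xk - xs)"
    unfolding sinner_def by (simp add: sum_subtractf sum_distrib_left)
  finally show ?thesis .
qed

lemma dcgs_objective_sum_le:
  fixes x y :: "nat \<Rightarrow> nat \<Rightarrow> 'a::euclidean_space"
  assumes sym: "\<forall>i j. E i j \<longleftrightarrow> E j i" and L: "0 < lap_norm m E"
    and xs: "\<forall>i\<in>{1..m}. lap_apply m E xs i = 0"
    and convex: "\<And>i a b. i \<in> {1..m} \<Longrightarrow> 0 \<le> bregman (f i) (gf i) a b"
    and dual: "\<And>k i. k \<in> {1..N} \<Longrightarrow> i \<in> {1..m} \<Longrightarrow>
      y k i = y (k - 1) i + (1 / lap_norm m E) *\<^sub>R lap_apply m E (dcgs_xt 1 x k) i"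
    and opt: "\<And>k i. k \<in> {1..N} \<Longrightarrow> i \<in> {1..m} \<Longrightarrow>
      cg_grad (gf i) (x (k - 1) i) (lap_apply m E (y k) i) (2 * lap_norm m E) (x k i) \<bullet> (x k i - xs i) \<le> e"
  shows "(\<Sum>k=1..N. Ftot m f (x k) - Ftot m f xs) \<le> real N * (real m * e) + dcgs_potential m E xs x y 0"
proof -
  let ?\<Phi> = "dcgs_potential m E xs x y"
  have "Ftot m f (x k) - Ftot m f xs \<le> real m * e - (?\<Phi> k - ?\<Phi> (k - 1))" if "k \<in> {1..N}" for k
    using Ftot_diff_le_cg_grad[OF convex opt[OF that]] dcgs_potential_decrease[OF sym L xs dual[OF that]]
    by (simp add: algebra_simps)
  then have "(\<Sum>k=1..N. Ftot m f (x k) - Ftot m f xs) \<le> (\<Sum>k=1..N. real m * e - (?\<Phi> k - ?\<Phi> (k - 1)))"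
    by (rule sum_mono)
  also have "\<dots> = real N * (real m * e) - (?\<Phi> N - ?\<Phi> 0)"
    using sum_telescope''[of 0 N ?\<Phi>] by (simp add: sum_subtractf)
  also have "\<dots> \<le> real N * (real m * e) + ?\<Phi> 0"
    using dcgs_potential_nonneg[OF sym L] by simp
  finally show ?thesis .
qed

lemma Ftot_dcgs_output_le:
  fixes x :: "nat \<Rightarrow> nat \<Rightarrow> 'a::euclidean_space"
  assumes "1 \<le> N" and convex: "\<And>i a b. i \<in> {1..m} \<Longrightarrow> 0 \<le> bregman (f i) (gf i) a b"
  shows "Ftot m f (dcgs_output N (\<lambda>k. 1) x) \<le> (\<Sum>k=1..N. Ftot m f (x k)) / real N"
proof -
  have N: "0 < real N" using assms(1) by simp
  have "f i (dcgs_output N (\<lambda>k. 1) x i) \<le> (\<Sum>k=1..N. f i (x k i)) / real N" if i: "i \<in> {1..m}" for i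
  proof -
    define xb where "xb = dcgs_output N (\<lambda>k. 1) x i"
    have "(\<Sum>k=1..N. x k i) = real N *\<^sub>R xb"
      unfolding xb_def dcgs_output_def using N by simp
    then have "(\<Sum>k=1..N. f i xb + gf i xb \<bullet> (x k i - xb)) = real N * f i xb"
      by (simp add: sum.distrib inner_sum_right[symmetric] sum_subtractf inner_diff_right)
    moreover have "(\<Sum>k=1..N. f i xb + gf i xb \<bullet> (x k i - xb)) \<le> (\<Sum>k=1..N. f i (x k i))"
    proof (rule sum_mono)
      fix k
      show "f i xb + gf i xb \<bullet> (x k i - xb) \<le> f i (x k i)"
        using convex[OF i, of xb "x k i"] unfolding bregman_def by simp
    qed
    ultimately show ?thesis
      unfolding xb_def[symmetric] using N by (simp add: field_simps)
  qed
  then have "Ftot m f (dcgs_output N (\<lambda>k. 1) x) \<le> (\<Sum>i=1..m. (\<Sum>k=1..N. f i (x k i)) / real N)"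
    unfolding Ftot_def by (rule sum_mono)
  also have "\<dots> = (\<Sum>k=1..N. Ftot m f (x k)) / real N"
    unfolding Ftot_def sum_divide_distrib[symmetric] by (rule arg_cong[OF sum.swap])
  finally show ?thesis .
qed

section \<open>Complexity of DCGS\<close>

lemma iteration_count_bounds:
  fixes a \<epsilon> :: real
  assumes "0 < \<epsilon>" and "\<epsilon> \<le> a"
  shows "1 \<le> nat \<lceil>3 * a / \<epsilon>\<rceil>" and "3 * a / \<epsilon> \<le> real (nat \<lceil>3 * a / \<epsilon>\<rceil>)"
    and "real (nat \<lceil>3 * a / \<epsilon>\<rceil>) \<le> 4 * a / \<epsilon>"
proof -
  have ge_1: "1 \<le> a / \<epsilon>"
    using assms by simp
  show lower: "3 * a / \<epsilon> \<le> real (nat \<lceil>3 * a / \<epsilon>\<rceil>)"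
    by linarith
  have "real (nat \<lceil>3 * a / \<epsilon>\<rceil>) \<le> 3 * a / \<epsilon> + 1"
    using ge_1 by linarith
  moreover have "3 * a / \<epsilon> + 1 \<le> 4 * a / \<epsilon>"
    using assms by (simp add: field_simps)
  ultimately show "real (nat \<lceil>3 * a / \<epsilon>\<rceil>) \<le> 4 * a / \<epsilon>"
    by linarith
  have "1 \<le> real (nat \<lceil>3 * a / \<epsilon>\<rceil>)"
    using lower ge_1 by simp
  then show "1 \<le> nat \<lceil>3 * a / \<epsilon>\<rceil>"
    by simp
qed

lemma lo_calls_bound_arith:
  fixes L D \<epsilon> l B m N :: real
  assumes L: "0 < L" and D: "0 < D" and \<epsilon>: "0 < \<epsilon>" "\<epsilon> \<le> L" and l: "0 \<le> l" and B: "0 \<le> B"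
    and m: "1 \<le> m" and N: "0 < N" "N \<le> 4 * L * D / \<epsilon>"
  shows "N * (8 * ((l + 2 * L) * B) / (L * D / (m * N)) + 5) \<le> (256 * B + 20) * m * L * (l + L) * D / \<epsilon>\<^sup>2"
proof -
  have "N * (8 * ((l + 2 * L) * B) / (L * D / (m * N))) = 8 * (l + 2 * L) * B * m / (L * D) * N\<^sup>2"
    using L D N m by (simp add: field_simps power2_eq_square)
  also have "\<dots> \<le> 8 * (2 * (l + L)) * B * m / (L * D) * (4 * L * D / \<epsilon>)\<^sup>2"
    using L D B m l N by (intro mult_mono divide_right_mono power_mono) simp_all
  also have "\<dots> = 256 * B * m * L * (l + L) * D / \<epsilon>\<^sup>2"
    using L D \<epsilon> by (simp add: field_simps power2_eq_square)
  finally have quadratic: "N * (8 * ((l + 2 * L) * B) / (L * D / (m * N))) \<le> 256 * B * m * L * (l + L) * D / \<epsilon>\<^sup>2" .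
  have "5 * N \<le> 20 * L * D * \<epsilon> / \<epsilon>\<^sup>2"
    using N \<epsilon> by (simp add: power2_eq_square)
  also have "\<dots> \<le> 20 * L * D * (m * (l + L)) / \<epsilon>\<^sup>2"
  proof -
    have "\<epsilon> \<le> 1 * (l + L)" using \<epsilon> l by simp
    also have "\<dots> \<le> m * (l + L)" using m l L by (intro mult_right_mono) simp_all
    finally show ?thesis using L D by (intro divide_right_mono mult_left_mono) simp_all
  qed
  finally have linear: "5 * N \<le> 20 * L * D * (m * (l + L)) / \<epsilon>\<^sup>2" .
  show ?thesis
    using quadratic linear by (simp add: add_divide_distrib algebra_simps)
qed

locale dcgs_problem =
  fixes X :: "'a::euclidean_space set" and m :: nat and E :: "nat \<Rightarrow> nat \<Rightarrow> bool"
    and f :: "nat \<Rightarrow> 'a \<Rightarrow> real" and gf :: "nat \<Rightarrow> 'a \<Rightarrow> 'a" and l :: real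
    and x0 y0 xs :: "nat \<Rightarrow> 'a"
  assumes compact: "compact X" and convex: "convex X"
    and two_le_m: "2 \<le> m" and graph: "simple_graph_on m E" and connected: "graph_connected m E"
    and deriv: "\<And>i x. i \<in> {1..m} \<Longrightarrow> (f i has_derivative (\<lambda>h. gf i x \<bullet> h)) (at x)"
    and bregman_bounds: "\<And>i x y. i \<in> {1..m} \<Longrightarrow>
      0 \<le> bregman (f i) (gf i) x y \<and> bregman (f i) (gf i) x y \<le> l / 2 * (norm (y - x))\<^sup>2"
    and opt: "is_opt_sol m E f X xs"
begin

abbreviation "Lnorm \<equiv> lap_norm m E"
abbreviation "D \<equiv> max ((snorm m (\<lambda>i. x0 i - xs i))\<^sup>2) ((snorm m y0)\<^sup>2)"
abbreviation "B \<equiv> (diameter X)\<^sup>2"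

lemma Lnorm_ge_1: "1 \<le> Lnorm"
  using lap_norm_ge_1[OF two_le_m graph connected] .

lemma l_nonneg: "0 \<le> l"
proof -
  obtain b :: 'a where "b \<in> Basis" using nonempty_Basis by blast
  then show ?thesis
    using bregman_bounds[of 1 0 b] two_le_m by simp
qed

lemma sq_dist_le_B: "a \<in> X \<Longrightarrow> b \<in> X \<Longrightarrow> (norm (a - b))\<^sup>2 \<le> B"
  using diameter_bounded_bound[OF compact_imp_bounded[OF compact]]
  by (simp add: dist_norm power_mono)

lemma dcgs_cg_gap_bound:
  assumes run: "dcgs_run m E f gf X N (\<lambda>k. 1) (\<lambda>k. Lnorm) (\<lambda>k. 2 * Lnorm) (\<lambda>k i. e) ls x0 y0 x y Z S"
    and e: "0 < e" and k: "k \<in> {1..N}" and i: "i \<in> {1..m}"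
  shows "\<exists>t \<le> 2 * (nat \<lceil>4 * ((l + 2 * Lnorm) * B) / e\<rceil> + 1).
    cg_gap (gf i) (x (k - 1) i) (dcgs_w m E y k i) (2 * Lnorm) (Z k i t) (S k i t) \<le> e"
proof (rule cg_trace_gap_bound[OF compact convex])
  show "continuous_on X (f i)"
    using deriv[OF i] by (meson continuous_at_imp_continuous_on has_derivative_continuous)
  show "cg_trace (f i) (gf i) X (x (k - 1) i) (dcgs_w m E y k i) (2 * Lnorm) ls (Z k i) (S k i)"
    using run k i unfolding dcgs_run_def by blast
qed (use bregman_bounds[OF i] l_nonneg Lnorm_ge_1 sq_dist_le_B e in auto)

lemma dcgs_terminates:
  assumes "dcgs_run m E f gf X N (\<lambda>k. 1) (\<lambda>k. Lnorm) (\<lambda>k. 2 * Lnorm) (\<lambda>k i. e) ls x0 y0 x y Z S"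
    and "0 < e"
  shows "dcgs_cg_terminates m E gf N (\<lambda>k. 2 * Lnorm) (\<lambda>k i. e) x y Z S"
  using dcgs_cg_gap_bound[OF assms] unfolding dcgs_cg_terminates_def by blast

lemma dcgs_lo_calls_le:
  assumes run: "dcgs_run m E f gf X N (\<lambda>k. 1) (\<lambda>k. Lnorm) (\<lambda>k. 2 * Lnorm) (\<lambda>k i. e) ls x0 y0 x y Z S"
    and e: "0 < e" and i: "i \<in> {1..m}"
  shows "real (dcgs_lo_calls m E (gf i) i N (\<lambda>k. 2 * Lnorm) (\<lambda>k i. e) x y Z S)
    \<le> real N * (8 * ((l + 2 * Lnorm) * B) / e + 5)"
proof -
  define K where "K = nat \<lceil>4 * ((l + 2 * Lnorm) * B) / e\<rceil> + 1"
  have "cg_stop (gf i) (x (k - 1) i) (dcgs_w m E y k i) (2 * Lnorm) e (Z k i) (S k i) \<le> 2 * K"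
    if "k \<in> {1..N}" for k
    using dcgs_cg_gap_bound[OF run e that i] cg_stop_le unfolding K_def by (meson order_trans)
  then have "dcgs_lo_calls m E (gf i) i N (\<lambda>k. 2 * Lnorm) (\<lambda>k i. e) x y Z S \<le> (\<Sum>k=1..N. 2 * K + 1)"
    unfolding dcgs_lo_calls_def by (intro sum_mono) simp
  then have "real (dcgs_lo_calls m E (gf i) i N (\<lambda>k. 2 * Lnorm) (\<lambda>k i. e) x y Z S) \<le> real (N * (2 * K + 1))"
    by (simp only: of_nat_le_iff) simp
  also have "\<dots> = real N * (2 * real K + 1)"
    by (simp add: algebra_simps)
  also have "\<dots> \<le> real N * (8 * ((l + 2 * Lnorm) * B) / e + 5)"
  proof -
    have "0 \<le> 4 * ((l + 2 * Lnorm) * B) / e"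
      using l_nonneg Lnorm_ge_1 e by simp
    then have "real K \<le> 4 * ((l + 2 * Lnorm) * B) / e + 2"
      unfolding K_def by linarith
    then show ?thesis by (intro mult_left_mono) simp_all
  qed
  finally show ?thesis .
qed

lemma E_sym: "\<forall>i j. E i j \<longleftrightarrow> E j i"
  using graph unfolding simple_graph_on_def by blast

lemma lap_apply_xs: "\<forall>i\<in>{1..m}. lap_apply m E xs i = 0"
  using opt unfolding is_opt_sol_def by blast

lemma xs_mem: "i \<in> {1..m} \<Longrightarrow> xs i \<in> X"
  using opt unfolding is_opt_sol_def by blast

lemma f_convex: "i \<in> {1..m} \<Longrightarrow> 0 \<le> bregman (f i) (gf i) a b"
  using bregman_bounds by blast

lemma dcgs_cg_opt:
  assumes run: "dcgs_run m E f gf X N (\<lambda>k. 1) (\<lambda>k. Lnorm) (\<lambda>k. 2 * Lnorm) (\<lambda>k i. e) ls x0 y0 x y Z S"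
    and e: "0 < e" and k: "k \<in> {1..N}" and i: "i \<in> {1..m}"
  shows "cg_grad (gf i) (x (k - 1) i) (lap_apply m E (y k) i) (2 * Lnorm) (x k i) \<bullet> (x k i - xs i) \<le> e"
proof -
  let ?stop = "cg_stop (gf i) (x (k - 1) i) (dcgs_w m E y k i) (2 * Lnorm) e (Z k i) (S k i)"
  have trace: "cg_trace (f i) (gf i) X (x (k - 1) i) (dcgs_w m E y k i) (2 * Lnorm) ls (Z k i) (S k i)"
    and xk: "x k i = Z k i ?stop"
    using run k i unfolding dcgs_run_def by auto
  show ?thesis
    using cg_grad_inner_le_cg_gap[OF trace xs_mem[OF i], of ?stop] dcgs_cg_gap_bound[OF run e k i]
      cg_gap_at_cg_stop
    unfolding xk dcgs_w_def by fastforce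
qed

lemma dcgs_potential_0_le:
  assumes "x 0 = x0" and "y 0 = y0"
  shows "dcgs_potential m E xs x y 0 \<le> 3 / 2 * Lnorm * D"
proof -
  have "(\<lambda>i. x0 i - xs i) = x0 - xs" by (simp add: fun_eq_iff)
  then have "sinner m (x 0 - xs) (x 0 - xs) \<le> D" and "sinner m (y 0) (y 0) \<le> D"
    unfolding assms power2_snorm[symmetric] by simp_all
  then have "Lnorm * sinner m (x 0 - xs) (x 0 - xs) \<le> Lnorm * D"
    and "Lnorm / 2 * sinner m (y 0) (y 0) \<le> Lnorm / 2 * D"
    using Lnorm_ge_1 by (simp_all add: mult_left_mono)
  then show ?thesis
    unfolding dcgs_potential_0 by linarith
qed

lemma dcgs_objective_gap_le:
  assumes run: "dcgs_run m E f gf X N (\<lambda>k. 1) (\<lambda>k. Lnorm) (\<lambda>k. 2 * Lnorm) (\<lambda>k i. e) ls x0 y0 x y Z S"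
    and e: "0 < e" and N: "1 \<le> N"
  shows "Ftot m f (dcgs_output N (\<lambda>k. 1) x) - Ftot m f xs \<le> real m * e + 3 * Lnorm * D / (2 * real N)"
proof -
  have L: "0 < Lnorm" using Lnorm_ge_1 by simp
  have "x 0 = x0" and "y 0 = y0"
    and dual: "\<And>k i. k \<in> {1..N} \<Longrightarrow> i \<in> {1..m} \<Longrightarrow>
      y k i = y (k - 1) i + (1 / Lnorm) *\<^sub>R lap_apply m E (dcgs_xt 1 x k) i"
    using run unfolding dcgs_run_def by auto
  have "(\<Sum>k=1..N. Ftot m f (x k) - Ftot m f xs) \<le> real N * (real m * e) + dcgs_potential m E xs x y 0"
    by (rule dcgs_objective_sum_le[where f = f and gf = gf and x = x and y = y,
          OF E_sym L lap_apply_xs f_convex dual dcgs_cg_opt[OF run e]])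
  also have "\<dots> \<le> real N * (real m * e) + 3 / 2 * Lnorm * D"
    using dcgs_potential_0_le[of x y, OF \<open>x 0 = x0\<close> \<open>y 0 = y0\<close>] by simp
  finally have sum_le: "(\<Sum>k=1..N. Ftot m f (x k) - Ftot m f xs) \<le> real N * (real m * e) + 3 / 2 * Lnorm * D" .
  have "Ftot m f (dcgs_output N (\<lambda>k. 1) x) - Ftot m f xs \<le> (\<Sum>k=1..N. Ftot m f (x k) - Ftot m f xs) / real N"
    using Ftot_dcgs_output_le[where f = f and x = x, OF N f_convex] N
    by (simp add: sum_subtractf diff_divide_distrib)
  also have "\<dots> \<le> (real N * (real m * e) + 3 / 2 * Lnorm * D) / real N"
    using sum_le N by (simp add: divide_right_mono)
  also have "\<dots> = real m * e + 3 * Lnorm * D / (2 * real N)"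
    using N by (simp add: field_simps)
  finally show ?thesis .
qed

lemma dcgs_objective_gap_le_eps:
  assumes run: "dcgs_run m E f gf X N (\<lambda>k. 1) (\<lambda>k. Lnorm) (\<lambda>k. 2 * Lnorm)
      (\<lambda>k i. Lnorm * D / (real m * real N)) ls x0 y0 x y Z S"
    and D: "0 < D" and \<epsilon>: "0 < \<epsilon>" and N: "1 \<le> N" "3 * (Lnorm * D) / \<epsilon> \<le> real N"
  shows "Ftot m f (dcgs_output N (\<lambda>k. 1) x) - Ftot m f xs \<le> \<epsilon>"
proof -
  have e: "0 < Lnorm * D / (real m * real N)"
    using Lnorm_ge_1 D two_le_m N by simp
  have "Ftot m f (dcgs_output N (\<lambda>k. 1) x) - Ftot m f xs
      \<le> real m * (Lnorm * D / (real m * real N)) + 3 * Lnorm * D / (2 * real N)"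
    by (rule dcgs_objective_gap_le[OF run e N(1)])
  also have "\<dots> = 5 / 2 * (Lnorm * D) / real N"
    using two_le_m N by (simp add: field_simps)
  also have "\<dots> \<le> \<epsilon>"
  proof -
    have "5 / 2 * (Lnorm * D) \<le> 3 * (Lnorm * D)"
      using Lnorm_ge_1 D by simp
    also have "\<dots> \<le> \<epsilon> * real N"
      using N(2) \<epsilon> by (simp add: field_simps)
    finally show ?thesis
      using N(1) by (simp add: field_simps)
  qed
  finally show ?thesis .
qed

lemma dcgs_lo_calls_le_eps:
  assumes run: "dcgs_run m E f gf X N (\<lambda>k. 1) (\<lambda>k. Lnorm) (\<lambda>k. 2 * Lnorm)
      (\<lambda>k i. Lnorm * D / (real m * real N)) ls x0 y0 x y Z S"
    and D: "0 < D" and \<epsilon>: "0 < \<epsilon>" "\<epsilon> \<le> Lnorm" and N: "1 \<le> N" "real N \<le> 4 * (Lnorm * D) / \<epsilon>"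
    and i: "i \<in> {1..m}"
  shows "real (dcgs_lo_calls m E (gf i) i N (\<lambda>k. 2 * Lnorm) (\<lambda>k i. Lnorm * D / (real m * real N)) x y Z S)
    \<le> (256 * B + 20) * real m * Lnorm * (l + Lnorm) * D / \<epsilon>\<^sup>2"
proof -
  have e: "0 < Lnorm * D / (real m * real N)"
    using Lnorm_ge_1 D two_le_m N by simp
  have "real N * (8 * ((l + 2 * Lnorm) * B) / (Lnorm * D / (real m * real N)) + 5)
      \<le> (256 * B + 20) * real m * Lnorm * (l + Lnorm) * D / \<epsilon>\<^sup>2"
    using Lnorm_ge_1 D \<epsilon> l_nonneg two_le_m N by (intro lo_calls_bound_arith) simp_all
  then show ?thesis
    using dcgs_lo_calls_le[OF run e i] by linarith
qed

lemma dcgs_complexity: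
  assumes \<epsilon>: "0 < \<epsilon>" "\<epsilon> \<le> Lnorm * D" "\<epsilon> \<le> Lnorm"
  shows "\<exists>N::nat. N \<ge> 1 \<and> real (2 * N) \<le> 8 * Lnorm * D / \<epsilon> \<and>
    (\<forall>x y Z S.
       dcgs_run m E f gf X N (\<lambda>k. 1) (\<lambda>k. Lnorm) (\<lambda>k. 2 * Lnorm)
         (\<lambda>k i. Lnorm * D / (real m * real N)) ls x0 y0 x y Z S
       \<longrightarrow>
       dcgs_cg_terminates m E gf N (\<lambda>k. 2 * Lnorm) (\<lambda>k i. Lnorm * D / (real m * real N)) x y Z S \<and>
       Ftot m f (dcgs_output N (\<lambda>k. 1) x) - Ftot m f xs \<le> \<epsilon> \<and>
       (\<forall>i\<in>{1..m}. real (dcgs_lo_calls m E (gf i) i N (\<lambda>k. 2 * Lnorm)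
                            (\<lambda>k i. Lnorm * D / (real m * real N)) x y Z S)
          \<le> (256 * B + 20) * real m * Lnorm * (l + Lnorm) * D / \<epsilon>\<^sup>2))"
proof -
  define N where "N = nat \<lceil>3 * (Lnorm * D) / \<epsilon>\<rceil>"
  have N: "1 \<le> N" and N_ge: "3 * (Lnorm * D) / \<epsilon> \<le> real N" and N_le: "real N \<le> 4 * (Lnorm * D) / \<epsilon>"
    using iteration_count_bounds[OF \<epsilon>(1,2)] unfolding N_def by auto
  have "0 < Lnorm * D"
    using \<epsilon> by linarith
  then have D: "0 < D"
    using Lnorm_ge_1 by (simp add: zero_less_mult_iff)
  have e: "0 < Lnorm * D / (real m * real N)"
    using Lnorm_ge_1 D two_le_m N by simp
  have "real (2 * N) \<le> 8 * Lnorm * D / \<epsilon>"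
    using N_le by simp
  then show ?thesis
    using N dcgs_terminates[OF _ e] dcgs_objective_gap_le_eps[OF _ D \<epsilon>(1) N N_ge]
      dcgs_lo_calls_le_eps[OF _ D \<epsilon>(1,3) N N_le]
    by blast
qed

end

theorem corollary1:
  fixes X :: "'a::euclidean_space set"
  assumes "compact X" and "convex X" and "X \<noteq> {}"
  shows "\<exists>C1>0. \<exists>C2>0.
    \<forall>(m::nat) (E::nat \<Rightarrow> nat \<Rightarrow> bool) (f::nat \<Rightarrow> 'a \<Rightarrow> real) (gf::nat \<Rightarrow> 'a \<Rightarrow> 'a) (l::real)
      (x0::nat \<Rightarrow> 'a) (y0::nat \<Rightarrow> 'a) (xs::nat \<Rightarrow> 'a) (ls::bool).
      m \<ge> 2 \<and> simple_graph_on m E \<and> graph_connected m E \<and>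
      (\<forall>i\<in>{1..m}. \<forall>x. (f i has_derivative (\<lambda>h. gf i x \<bullet> h)) (at x)) \<and>
      (\<forall>i\<in>{1..m}. \<forall>x y. 0 \<le> f i y - f i x - gf i x \<bullet> (y - x) \<and>
                        f i y - f i x - gf i x \<bullet> (y - x) \<le> l / 2 * (norm (y - x))\<^sup>2) \<and>
      (\<forall>i\<in>{1..m}. x0 i \<in> X) \<and>
      is_opt_sol m E f X xs \<and>
      max ((snorm m (\<lambda>i. x0 i - xs i))\<^sup>2) ((snorm m y0)\<^sup>2) > 0
      \<longrightarrow>
      (let Ln = lap_norm m E; D = max ((snorm m (\<lambda>i. x0 i - xs i))\<^sup>2) ((snorm m y0)\<^sup>2) in
       \<exists>\<epsilon>0>0. \<forall>\<epsilon>. 0 < \<epsilon> \<and> \<epsilon> < \<epsilon>0 \<longrightarrow>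
         (\<exists>N::nat. N \<ge> 1 \<and> real (2 * N) \<le> C1 * Ln * D / \<epsilon> \<and>
           (\<forall>x y Z S.
              dcgs_run m E f gf X N (\<lambda>k. 1) (\<lambda>k. Ln) (\<lambda>k. 2 * Ln)
                 (\<lambda>k i. Ln * D / (real m * real N)) ls x0 y0 x y Z S
              \<longrightarrow>
              dcgs_cg_terminates m E gf N (\<lambda>k. 2 * Ln) (\<lambda>k i. Ln * D / (real m * real N)) x y Z S \<and>
              Ftot m f (dcgs_output N (\<lambda>k. 1) x) - Ftot m f xs \<le> \<epsilon> \<and>
              (\<forall>i\<in>{1..m}. real (dcgs_lo_calls m E (gf i) i N (\<lambda>k. 2 * Ln)
                                   (\<lambda>k i. Ln * D / (real m * real N)) x y Z S)
                 \<le> C2 * real m * Ln * (l + Ln) * D / \<epsilon>\<^sup>2))))"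
proof (rule exI[of _ 8], intro conjI exI[of _ "256 * (diameter X)\<^sup>2 + 20"] allI impI, goal_cases)
  case (3 m E f gf l x0 y0 xs ls)
  interpret dcgs_problem X m E f gf l x0 y0 xs
    using assms 3 by unfold_locales (auto simp: bregman_def)
  have "0 < min (Lnorm * D) Lnorm"
    using 3 Lnorm_ge_1 by simp
  then show ?case
    unfolding Let_def by (intro exI[of _ "min (Lnorm * D) Lnorm"] conjI allI impI dcgs_complexity) auto
qed (simp_all add: add_nonneg_pos)

end
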